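(* In the setting of the addition algorithm, for every $\varphi\in\mathbb{R}^V$: $\tau(v)=\tau_1(v,\cdot)\ge\tau_2(v,\cdot)\ge\cdots\ge\tau_{|V|}(v,\cdot)\ge0$ pointwise for every $v\in V$; $s_k\in[0,\tau(P_k)]$ for $1\le k\le|V|$; and $s_1\le s_2\le\cdots\le s_{|V|}$. In particular $0\le T^+(\varphi)_v-\varphi_v=\varphi_v-T^-(\varphi)_v\le\tau(v)$ for all $v$.
   Context: Addition algorithm. Let $G=(V,E)$ be a finite connected graph ($v\sim w$ means $(v,w)\in E$), $\tau:V\to[0,\infty)$, $0<\varepsilon\le1/2$, and fix a total order $\preceq$ on $V$. Let $f:\mathbb{R}\to\mathbb{R}$ be $f(x)=0$ for $|x|\ge1$, $f(x)=(1+x)/\varepsilon$ on $[-1,-1+\varepsilon]$, $f(x)=1$ on $[-1+\varepsilon,1-\varepsilon]$, $f(x)=(1-x)/\varepsilon$ on $[1-\varepsilon,1]$. For $v\in V$, $h,t\in\mathbb{R}$ let $m_{v,h,t}(h')=\min(\tau(v)-t,\varepsilon/2)f(h'-h)+t$ if $\tau(v)\ge t$, and $m_{v,h,t}(h')=t$ if $\tau(v)<t$. On input $\varphi\in\mathbb{R}^V$ the algorithm outputs an ordering $P_1,\dots,P_{|V|}$ of $V$, numbers $s_k$ and functions $\tau_k:V\times\mathbb{R}\to\mathbb{R}$: set $\tau_1(v,h)=\tau(v)$; for $k=1,\dots,|V|$: let $P_k$ be the vertex $v\in V\setminus\{P_1,\dots,P_{k-1}\}$ minimizing $\tau_k(v,\varphi_v)$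 (ties broken by taking the $\preceq$-smallest); set $s_k=\tau_k(P_k,\varphi_{P_k})$; if $k<|V|$ set $\tau_{k+1}(v,h)=\tau_k(v,h)$ if $v\in\{P_1,\dots,P_k\}$ or $v\not\sim P_k$, and $\tau_{k+1}(v,h)=\min(\tau_k(v,h),m_{v,\varphi_{P_k},s_k}(h))$ otherwise. Define $T^+(\varphi)_{P_k}=\varphi_{P_k}+s_k$ ($1\le k\le|V|$) and $T^-(\varphi)=2\varphi-T^+(\varphi)$. *)

theory Defs
  imports Main Complex_Main
begin

definition f_eps :: "real \<Rightarrow> real \<Rightarrow> real" where
  "f_eps eps x =
     (if \<bar>x\<bar> \<ge> 1 then 0
      else if x \<le> -1 + eps then (1 + x) / eps
      else if x \<le> 1 - eps then 1
      else (1 - x) / eps)"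

definition m_fun :: "('a \<Rightarrow> real) \<Rightarrow> real \<Rightarrow> 'a \<Rightarrow> real \<Rightarrow> real \<Rightarrow> real \<Rightarrow> real" where
  "m_fun tau eps v h t h' =
     (if tau v \<ge> t then min (tau v - t) (eps / 2) * f_eps eps (h' - h) + t else t)"

definition select_vertex :: "'a set \<Rightarrow> ('a \<Rightarrow> 'a \<Rightarrow> bool) \<Rightarrow> ('a \<Rightarrow> real)
                     \<Rightarrow> 'a list \<Rightarrow> ('a \<Rightarrow> real \<Rightarrow> real) \<Rightarrow> 'a" where
  "select_vertex V le phi Ps t =
     (THE v. v \<in> V - set Ps \<and>
        (\<forall>w \<in> V - set Ps. t v (phi v) < t w (phi w) \<or>
                          (t v (phi v) = t w (phi w) \<and> le v w)))"

text \<open>alg_state k = ([P_1,...,P_k], tau_{k+1}).\<close>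
fun alg_state :: "'a set \<Rightarrow> ('a \<times> 'a) set \<Rightarrow> ('a \<Rightarrow> 'a \<Rightarrow> bool) \<Rightarrow> ('a \<Rightarrow> real) \<Rightarrow> real
                  \<Rightarrow> ('a \<Rightarrow> real) \<Rightarrow> nat \<Rightarrow> 'a list \<times> ('a \<Rightarrow> real \<Rightarrow> real)" where
  "alg_state V E le tau eps phi 0 = ([], (\<lambda>v h. tau v))"
| "alg_state V E le tau eps phi (Suc k) =
     (let (Ps, t) = alg_state V E le tau eps phi k;
          p = select_vertex V le phi Ps t;
          s = t p (phi p);
          Ps' = Ps @ [p]
      in (Ps', (\<lambda>v h. if v \<in> set Ps' \<or> (v, p) \<notin> E then t v h
                       else min (t v h) (m_fun tau eps v (phi p) s h))))"

definition tauk :: "'a set \<Rightarrow> ('a \<times> 'a) set \<Rightarrow> ('a \<Rightarrow> 'a \<Rightarrow> bool) \<Rightarrow> ('a \<Rightarrow> real) \<Rightarrow> real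
                  \<Rightarrow> ('a \<Rightarrow> real) \<Rightarrow> nat \<Rightarrow> 'a \<Rightarrow> real \<Rightarrow> real" where
  "tauk V E le tau eps phi k = snd (alg_state V E le tau eps phi (k - 1))"

definition Pk :: "'a set \<Rightarrow> ('a \<times> 'a) set \<Rightarrow> ('a \<Rightarrow> 'a \<Rightarrow> bool) \<Rightarrow> ('a \<Rightarrow> real) \<Rightarrow> real
                  \<Rightarrow> ('a \<Rightarrow> real) \<Rightarrow> nat \<Rightarrow> 'a" where
  "Pk V E le tau eps phi k =
     select_vertex V le phi (fst (alg_state V E le tau eps phi (k - 1)))
                     (snd (alg_state V E le tau eps phi (k - 1)))"

definition sk :: "'a set \<Rightarrow> ('a \<times> 'a) set \<Rightarrow> ('a \<Rightarrow> 'a \<Rightarrow> bool) \<Rightarrow> ('a \<Rightarrow> real) \<Rightarrow> real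
                  \<Rightarrow> ('a \<Rightarrow> real) \<Rightarrow> nat \<Rightarrow> real" where
  "sk V E le tau eps phi k =
     tauk V E le tau eps phi k (Pk V E le tau eps phi k) (phi (Pk V E le tau eps phi k))"

definition Tplus :: "'a set \<Rightarrow> ('a \<times> 'a) set \<Rightarrow> ('a \<Rightarrow> 'a \<Rightarrow> bool) \<Rightarrow> ('a \<Rightarrow> real) \<Rightarrow> real
                  \<Rightarrow> ('a \<Rightarrow> real) \<Rightarrow> 'a \<Rightarrow> real" where
  "Tplus V E le tau eps phi v =
     phi v + sk V E le tau eps phi
               (THE k. k \<in> {1..card V} \<and> Pk V E le tau eps phi k = v)"

definition Tminus :: "'a set \<Rightarrow> ('a \<times> 'a) set \<Rightarrow> ('a \<Rightarrow> 'a \<Rightarrow> bool) \<Rightarrow> ('a \<Rightarrow> real) \<Rightarrow> real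
                  \<Rightarrow> ('a \<Rightarrow> real) \<Rightarrow> 'a \<Rightarrow> real" where
  "Tminus V E le tau eps phi v = 2 * phi v - Tplus V E le tau eps phi v"

end

theory Submission
  imports Defs
begin

text \<open>
  The addition algorithm is a greedy procedure: at step k it selects the
  unchosen vertex P_k of least current weight tau_k(v, phi v), records s_k, and lowers
  the weights of the unchosen neighbours of P_k to at most m_{v, phi(P_k), s_k}.
  Three observations give the whole statement:
  (1) the update only takes minima, so every weight is non-increasing in k and
      bounded by tau;
  (2) the bump function m_{v,h,s} never drops below its base level s, so the new
      weight of any vertex is at least min(old weight, s_k); with s_k \<ge> 0 this
      keeps the weights non-negative, and since P_{k+1} was a candidate at step k
      (weight \<ge> s_k by minimality of P_k) it yields s_k \<le> s_{k+1};
  (3) P_1, ..., P_|V| enumerate V without repetition, so T^+(phi)_v - phi_v is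
      exactly one of the numbers s_k, which lie in [0, tau(P_k)].
\<close>

lemma f_eps_nonneg: "0 < eps \<Longrightarrow> 0 \<le> f_eps eps x"
  unfolding f_eps_def by (auto simp: abs_if)

lemma m_fun_ge: "0 < eps \<Longrightarrow> t \<le> m_fun tau eps v h t h'"
  unfolding m_fun_def using f_eps_nonneg[of eps "h' - h"] by auto

lemma exists_lex_min:
  fixes g :: "'a \<Rightarrow> real"
  assumes "finite S" "S \<noteq> {}" "S \<subseteq> C"
    and refl: "\<forall>v \<in> C. le v v"
    and trans: "\<forall>u \<in> C. \<forall>v \<in> C. \<forall>w \<in> C. le u v \<and> le v w \<longrightarrow> le u w"
    and total: "\<forall>v \<in> C. \<forall>w \<in> C. le v w \<or> le w v"
  shows "\<exists>x\<in>S. \<forall>w\<in>S. g x < g w \<or> (g x = g w \<and> le x w)"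
  using assms(1-3)
proof (induction S rule: finite_ne_induct)
  case (singleton x)
  then show ?case using refl by simp
next
  case (insert a F)
  then obtain x where x: "x \<in> F" and x_min: "\<forall>w\<in>F. g x < g w \<or> (g x = g w \<and> le x w)"
    by blast
  have aC: "a \<in> C" and xC: "x \<in> C" using insert.prems x by auto
  show ?case
  proof (cases "g a < g x \<or> (g a = g x \<and> le a x)")
    case True
    have "g a < g w \<or> (g a = g w \<and> le a w)" if w: "w \<in> F" for w
    proof -
      have "le a x \<and> le x w \<longrightarrow> le a w" using trans aC xC w insert.prems by blast
      moreover have "g x < g w \<or> (g x = g w \<and> le x w)" using x_min w by blast
      ultimately show ?thesis using True by auto
    qed
    moreover have "le a a" using refl aC by blast
    ultimately show ?thesis by blast
  next
    case False
    then have "g x < g a \<or> (g x = g a \<and> le x a)"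
      using total aC xC by auto
    then show ?thesis using x x_min by blast
  qed
qed

text \<open>The standing hypotheses of the algorithm needed for the invariants below.\<close>

locale addition_algorithm =
  fixes V :: "'a set" and E :: "('a \<times> 'a) set" and le :: "'a \<Rightarrow> 'a \<Rightarrow> bool"
    and tau :: "'a \<Rightarrow> real" and eps :: real and phi :: "'a \<Rightarrow> real"
  assumes finV: "finite V"
    and le_refl: "\<forall>v \<in> V. le v v"
    and le_antisym: "\<forall>v \<in> V. \<forall>w \<in> V. le v w \<and> le w v \<longrightarrow> v = w"
    and le_trans: "\<forall>u \<in> V. \<forall>v \<in> V. \<forall>w \<in> V. le u v \<and> le v w \<longrightarrow> le u w"
    and le_total: "\<forall>v \<in> V. \<forall>w \<in> V. le v w \<or> le w v"
    and tau_nonneg: "\<forall>v \<in> V. tau v \<ge> 0"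
    and eps_pos: "0 < eps"
begin

lemma select_vertex_spec:
  fixes Ps :: "'a list" and t :: "'a \<Rightarrow> real \<Rightarrow> real"
  assumes "V - set Ps \<noteq> {}"
  defines "p \<equiv> select_vertex V le phi Ps t"
  shows "p \<in> V - set Ps" and "\<And>w. w \<in> V - set Ps \<Longrightarrow> t p (phi p) \<le> t w (phi w)"
proof -
  let ?S = "V - set Ps"
  let ?g = "\<lambda>w. t w (phi w)"
  let ?is_min = "\<lambda>v. v \<in> ?S \<and> (\<forall>w \<in> ?S. ?g v < ?g w \<or> (?g v = ?g w \<and> le v w))"
  have "\<exists>x\<in>?S. \<forall>w\<in>?S. ?g x < ?g w \<or> (?g x = ?g w \<and> le x w)"
    by (rule exists_lex_min[OF _ assms(1) _ le_refl le_trans le_total]) (use finV in auto)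
  then obtain x where x: "?is_min x" by blast
  have "y = x" if y: "?is_min y" for y
  proof -
    have "?g x < ?g y \<or> (?g x = ?g y \<and> le x y)" "?g y < ?g x \<or> (?g y = ?g x \<and> le y x)"
      using x y by blast+
    then have "le x y" "le y x" by auto
    then show ?thesis using le_antisym x y by blast
  qed
  then have p_x: "p = x"
    unfolding p_def select_vertex_def using x by (intro the_equality)
  show "p \<in> ?S" using x p_x by simp
  show "?g p \<le> ?g w" if "w \<in> ?S" for w
  proof -
    have "?g x < ?g w \<or> (?g x = ?g w \<and> le x w)" using x that by blast
    then show ?thesis using p_x by auto
  qed
qed

text \<open>Notation for the state after k steps: the chosen list [P_1, ..., P_k], the
  weights tau_{k+1}, and the next choice P_{k+1}.\<close>

abbreviation state :: "nat \<Rightarrow> 'a list \<times> ('a \<Rightarrow> real \<Rightarrow> real)" where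
  "state \<equiv> alg_state V E le tau eps phi"

abbreviation chosen :: "nat \<Rightarrow> 'a list" where
  "chosen k \<equiv> fst (state k)"

abbreviation weight :: "nat \<Rightarrow> 'a \<Rightarrow> real \<Rightarrow> real" where
  "weight k \<equiv> snd (state k)"

abbreviation pick :: "nat \<Rightarrow> 'a" where
  "pick k \<equiv> select_vertex V le phi (chosen k) (weight k)"

lemma chosen_Suc: "chosen (Suc k) = chosen k @ [pick k]"
  by (cases "state k") (simp add: Let_def)

lemma weight_Suc: "weight (Suc k) v h =
   (if v \<in> set (chosen (Suc k)) \<or> (v, pick k) \<notin> E then weight k v h
    else min (weight k v h) (m_fun tau eps v (phi (pick k)) (weight k (pick k) (phi (pick k))) h))"
  by (cases "state k") (simp add: Let_def)

declare alg_state.simps(2)[simp del]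

lemma tauk_Suc: "tauk V E le tau eps phi (Suc k) = weight k"
  by (simp add: tauk_def)

lemma Pk_Suc: "Pk V E le tau eps phi (Suc k) = pick k"
  by (simp add: Pk_def)

lemma sk_Suc: "sk V E le tau eps phi (Suc k) = weight k (pick k) (phi (pick k))"
  by (simp add: sk_def tauk_Suc Pk_Suc)

lemma weight_Suc_le: "weight (Suc k) v h \<le> weight k v h"
  by (simp add: weight_Suc)

lemma weight_le_tau: "weight k v h \<le> tau v"
  by (induction k) (use order_trans[OF weight_Suc_le] in auto)

text \<open>The decrease is bounded below: a new weight is at least the smaller of the old
  weight and the level s_{k+1} of the current step, since the bump never drops below
  its base level.\<close>

lemma weight_Suc_ge: "min (weight k v h) (weight k (pick k) (phi (pick k))) \<le> weight (Suc k) v h"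
  using m_fun_ge[OF eps_pos, of "weight k (pick k) (phi (pick k))" tau v "phi (pick k)" h]
  by (auto simp: weight_Suc)

lemma length_chosen: "length (chosen k) = k"
  by (induction k) (simp_all add: chosen_Suc)

lemma chosen_eq_map: "chosen k = map (Pk V E le tau eps phi) [1..<Suc k]"
  by (induction k) (simp_all add: chosen_Suc Pk_def)

lemma remaining_nonempty:
  assumes "k < card V" "distinct (chosen k)"
  shows "V - set (chosen k) \<noteq> {}"
proof
  assume "V - set (chosen k) = {}"
  then have "card V \<le> card (set (chosen k))" by (simp add: card_mono)
  also have "\<dots> = k" using assms(2) distinct_card length_chosen by metis
  finally show False using assms(1) by simp
qed

lemma chosen_valid: "k \<le> card V \<Longrightarrow> distinct (chosen k) \<and> set (chosen k) \<subseteq> V"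
proof (induction k)
  case (Suc k)
  then have "distinct (chosen k)" "set (chosen k) \<subseteq> V" "k < card V" by auto
  then have "pick k \<in> V - set (chosen k)"
    using select_vertex_spec(1) remaining_nonempty by blast
  then show ?case using Suc.IH \<open>k < card V\<close> by (simp add: chosen_Suc)
qed simp

lemma pick_spec:
  assumes "k < card V"
  shows "pick k \<in> V - set (chosen k)"
    and "\<And>w. w \<in> V - set (chosen k) \<Longrightarrow> weight k (pick k) (phi (pick k)) \<le> weight k w (phi w)"
  using select_vertex_spec remaining_nonempty assms chosen_valid[of k] by auto

text \<open>Non-negativity of the weights: the step level s_{k+1} is a weight of a vertex,
  hence non-negative, and new weights are bounded below by it.\<close>

lemma weight_nonneg: "k \<le> card V \<Longrightarrow> v \<in> V \<Longrightarrow> 0 \<le> weight k v h"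
proof (induction k arbitrary: v h)
  case 0
  then show ?case using tau_nonneg by simp
next
  case (Suc k)
  have "pick k \<in> V" using pick_spec(1) Suc.prems(1) by auto
  then have "0 \<le> min (weight k v h) (weight k (pick k) (phi (pick k)))"
    using Suc by simp
  then show ?case using weight_Suc_ge order_trans by blast
qed

text \<open>The step levels are monotone: P_{k+2} was already a candidate at step k+1,
  so its weight then was at least s_{k+1}, and the update keeps it at least s_{k+1}.\<close>

lemma level_mono:
  assumes "Suc k < card V"
  shows "weight k (pick k) (phi (pick k)) \<le> weight (Suc k) (pick (Suc k)) (phi (pick (Suc k)))"
proof -
  let ?q = "pick (Suc k)"
  have "?q \<in> V - set (chosen k)"
    using pick_spec(1)[OF assms] by (auto simp: chosen_Suc)
  then have "weight k (pick k) (phi (pick k)) \<le> weight k ?q (phi ?q)"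
    using pick_spec(2) assms by simp
  then show ?thesis using weight_Suc_ge[of k ?q "phi ?q"] by linarith
qed

lemma tauk_antimono: "k \<ge> 1 \<Longrightarrow> tauk V E le tau eps phi (k + 1) v h \<le> tauk V E le tau eps phi k v h"
  by (cases k) (simp_all add: tauk_Suc weight_Suc_le)

lemma tauk_nonneg: "k \<in> {1..card V} \<Longrightarrow> v \<in> V \<Longrightarrow> 0 \<le> tauk V E le tau eps phi k v h"
  by (cases k) (simp_all add: tauk_Suc weight_nonneg)

lemma sk_bounds:
  assumes "k \<in> {1..card V}"
  shows "0 \<le> sk V E le tau eps phi k \<and> sk V E le tau eps phi k \<le> tau (Pk V E le tau eps phi k)"
proof -
  obtain j where j: "k = Suc j" "j < card V" using assms by (cases k) auto
  then have "pick j \<in> V" using pick_spec(1) by blast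
  then show ?thesis
    using j weight_nonneg[of j] weight_le_tau by (simp add: sk_Suc Pk_Suc)
qed

lemma sk_mono: "k \<in> {1..<card V} \<Longrightarrow> sk V E le tau eps phi k \<le> sk V E le tau eps phi (k + 1)"
  by (cases k) (simp_all add: sk_Suc level_mono)

text \<open>P_1, ..., P_|V| enumerate V without repetition, so T^+(phi)_v - phi_v is the
  level s_k of the unique step k with P_k = v.\<close>

lemma Tplus_level:
  assumes "v \<in> V"
  obtains k where "k \<in> {1..card V}" "Pk V E le tau eps phi k = v"
    and "Tplus V E le tau eps phi v = phi v + sk V E le tau eps phi k"
proof -
  let ?P = "Pk V E le tau eps phi"
  have enum: "chosen (card V) = map ?P [1..<Suc (card V)]"
    by (rule chosen_eq_map)
  have valid: "distinct (chosen (card V))" "set (chosen (card V)) \<subseteq> V"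
    using chosen_valid by auto
  have indices: "set [1..<Suc (card V)] = {1..card V}" by auto
  have "card (set (chosen (card V))) = card V"
    using distinct_card[OF valid(1)] length_chosen by simp
  then have "V = set (chosen (card V))"
    using card_subset_eq[OF finV valid(2)] by simp
  also have "\<dots> = ?P ` {1..card V}"
    unfolding enum set_map indices ..
  finally have onto: "v \<in> ?P ` {1..card V}" using assms by simp
  have "distinct (map ?P [1..<Suc (card V)])" using valid(1) unfolding enum .
  then have inj: "inj_on ?P {1..card V}" unfolding distinct_map indices ..
  obtain k where k: "k \<in> {1..card V}" "?P k = v" using onto by (rule imageE) simp
  have "(THE k. k \<in> {1..card V} \<and> ?P k = v) = k"
  proof (rule the_equality)
    show "k \<in> {1..card V} \<and> ?P k = v" using k by simp
    show "j = k" if "j \<in> {1..card V} \<and> ?P j = v" for j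
      using inj_onD[OF inj] that k by simp
  qed
  then show ?thesis using that k by (simp add: Tplus_def)
qed

lemma displacement_bounds:
  assumes "v \<in> V"
  shows "0 \<le> Tplus V E le tau eps phi v - phi v
    \<and> Tplus V E le tau eps phi v - phi v = phi v - Tminus V E le tau eps phi v
    \<and> phi v - Tminus V E le tau eps phi v \<le> tau v"
proof -
  obtain k where k: "k \<in> {1..card V}" "Pk V E le tau eps phi k = v"
    and T: "Tplus V E le tau eps phi v = phi v + sk V E le tau eps phi k"
    using Tplus_level[OF assms] by blast
  have "0 \<le> sk V E le tau eps phi k \<and> sk V E le tau eps phi k \<le> tau v"
    using sk_bounds[OF k(1)] k(2) by simp
  then show ?thesis using T by (simp add: Tminus_def)
qed

end

theorem lemma2p1:
  fixes V :: "'a set" and E :: "('a \<times> 'a) set" and le :: "'a \<Rightarrow> 'a \<Rightarrow> bool"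
    and tau :: "'a \<Rightarrow> real" and eps :: real and phi :: "'a \<Rightarrow> real"
  assumes finV: "finite V" and neV: "V \<noteq> {}"
    and E_sub: "E \<subseteq> V \<times> V" and E_sym: "sym E" and E_irr: "irrefl E"
    and conn: "\<forall>v \<in> V. \<forall>w \<in> V. (v, w) \<in> E\<^sup>*"
    and le_refl: "\<forall>v \<in> V. le v v"
    and le_antisym: "\<forall>v \<in> V. \<forall>w \<in> V. le v w \<and> le w v \<longrightarrow> v = w"
    and le_trans: "\<forall>u \<in> V. \<forall>v \<in> V. \<forall>w \<in> V. le u v \<and> le v w \<longrightarrow> le u w"
    and le_total: "\<forall>v \<in> V. \<forall>w \<in> V. le v w \<or> le w v"
    and tau_nonneg: "\<forall>v \<in> V. tau v \<ge> 0"
    and eps_pos: "0 < eps" and eps_le: "eps \<le> 1/2"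
  shows "(\<forall>v \<in> V. \<forall>h. tauk V E le tau eps phi 1 v h = tau v)
       \<and> (\<forall>v \<in> V. \<forall>k \<in> {1..<card V}. \<forall>h.
            tauk V E le tau eps phi (k + 1) v h \<le> tauk V E le tau eps phi k v h)
       \<and> (\<forall>v \<in> V. \<forall>k \<in> {1..card V}. \<forall>h. tauk V E le tau eps phi k v h \<ge> 0)
       \<and> (\<forall>k \<in> {1..card V}. 0 \<le> sk V E le tau eps phi k
            \<and> sk V E le tau eps phi k \<le> tau (Pk V E le tau eps phi k))
       \<and> (\<forall>k \<in> {1..<card V}. sk V E le tau eps phi k \<le> sk V E le tau eps phi (k + 1))
       \<and> (\<forall>v \<in> V. 0 \<le> Tplus V E le tau eps phi v - phi v
            \<and> Tplus V E le tau eps phi v - phi v = phi v - Tminus V E le tau eps phi v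
            \<and> phi v - Tminus V E le tau eps phi v \<le> tau v)"
proof -
  interpret addition_algorithm V E le tau eps phi
    using finV le_refl le_antisym le_trans le_total tau_nonneg eps_pos by unfold_locales
  show ?thesis
  proof (intro conjI)
    show "\<forall>v \<in> V. \<forall>h. tauk V E le tau eps phi 1 v h = tau v"
      by (simp add: tauk_def)
    show "\<forall>v \<in> V. \<forall>k \<in> {1..<card V}. \<forall>h.
            tauk V E le tau eps phi (k + 1) v h \<le> tauk V E le tau eps phi k v h"
      using tauk_antimono by simp
  qed (use tauk_nonneg sk_bounds sk_mono displacement_bounds in blast)+
qed

end
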